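(* Let $X$ be a non-empty set, $(Y,\langle\cdot,\cdot\rangle)$ a real inner product space, and let $I:X\to\mathbb{R}$, $\Phi:X\to Y$ and $\mu>0$ be such that the function $x\mapsto I(x)+\mu\|\Phi(x)\|^2$ has a global minimum in $X$. Then at least one of the following assertions holds: (a) for each filtering cover $\mathcal{N}$ of $X$ there exists $A\in\mathcal{N}$ such that $$\sup_{\lambda\in Y}\inf_{x\in A}\big(I(x)+\mu(2\langle\Phi(x),\lambda\rangle-\|\lambda\|^2)\big)<\inf_{x\in A}\sup_{\lambda\in\Phi(A)}\big(I(x)+\mu(2\langle\Phi(x),\lambda\rangle-\|\lambda\|^2)\big);$$ (b) for each global minimum $u$ of $x\mapsto I(x)+\mu\|\Phi(x)\|^2$ one has $$I(u)\leq I(x)+2\mu\big(\langle\Phi(x),\Phi(u)\rangle-\|\Phi(u)\|^2\big)$$ for all $x\in X$.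
   Context: A family $\mathcal{N}$ of non-empty subsets of $X$ is a filtering cover of $X$ if $\bigcup_{A\in\mathcal{N}}A=X$ and for each $A_1,A_2\in\mathcal{N}$ there is $A_3\in\mathcal{N}$ with $A_1\cup A_2\subseteq A_3$. *)

theory Defs
  imports "HOL-Analysis.Analysis"
begin

definition filtering_cover :: "'a set \<Rightarrow> 'a set set \<Rightarrow> bool" where
  "filtering_cover X N \<longleftrightarrow>
     (\<forall>A\<in>N. A \<noteq> {} \<and> A \<subseteq> X) \<and> \<Union>N = X \<and>
     (\<forall>A1\<in>N. \<forall>A2\<in>N. \<exists>A3\<in>N. A1 \<union> A2 \<subseteq> A3)"

end

theory Submission
  imports Defs
begin

text \<open>Write \<open>L x \<lambda> = I x + \<mu> (2\<langle>\<Phi> x, \<lambda>\<rangle> - \<parallel>\<lambda>\<parallel>\<^sup>2) = I x + \<mu>\<parallel>\<Phi> x\<parallel>\<^sup>2 - \<mu>\<parallel>\<Phi> x - \<lambda>\<parallel>\<^sup>2\<close>.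
  Its diagonal \<open>L x (\<Phi> x)\<close> is the penalized functional, and assertion (b) says that
  \<open>L u (\<Phi> u) \<le> L x (\<Phi> u)\<close> for every minimizer \<open>u\<close> and every \<open>x\<close>.  If it fails for some
  \<open>u\<close> and \<open>x\<^sub>0\<close>, then on any set \<open>A\<close> containing both, the concave function
  \<open>\<lambda> \<mapsto> min (L u \<lambda>) (L x\<^sub>0 \<lambda>)\<close> stays uniformly below \<open>L u (\<Phi> u)\<close>: near \<open>\<Phi> u\<close> because
  \<open>L x\<^sub>0\<close> does, far from it because \<open>L u\<close> decays quadratically.  Hence the sup-inf over \<open>A\<close> lies
  strictly below \<open>L u (\<Phi> u)\<close>, which in turn bounds the inf-sup from below since \<open>u\<close> minimizes
  the diagonal.\<close>

definition lagrangian :: "('a \<Rightarrow> real) \<Rightarrow> ('a \<Rightarrow> 'b::real_inner) \<Rightarrow> real \<Rightarrow> 'a \<Rightarrow> 'b \<Rightarrow> real" where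
  "lagrangian I \<Phi> \<mu> x l = I x + \<mu> * (2 * inner (\<Phi> x) l - (norm l)\<^sup>2)"

lemma lagrangian_at_shift:
  "lagrangian I \<Phi> \<mu> x (a + h)
     = lagrangian I \<Phi> \<mu> x a + 2 * \<mu> * inner (\<Phi> x - a) h - \<mu> * (norm h)\<^sup>2"
  unfolding lagrangian_def power2_norm_eq_inner
  by (simp add: inner_add_left inner_add_right inner_diff_left inner_commute algebra_simps)

lemma lagrangian_diagonal: "lagrangian I \<Phi> \<mu> x (\<Phi> x) = I x + \<mu> * (norm (\<Phi> x))\<^sup>2"
  unfolding lagrangian_def power2_norm_eq_inner by simp

lemma quadratic_linear_max_bounded_below:
  fixes \<mu> \<delta> D :: real
  assumes "\<mu> > 0" and "\<delta> > 0" and "D \<ge> 0"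
  obtains \<epsilon> where "\<epsilon> > 0" and "\<And>t. t \<ge> 0 \<Longrightarrow> \<epsilon> \<le> max (\<mu> * t\<^sup>2) (\<delta> - 2 * \<mu> * D * t)"
proof
  define r where "r = \<delta> / (4 * \<mu> * D + 1)"
  have K: "4 * \<mu> * D + 1 > 0" using assms by (simp add: add_nonneg_pos)
  have r: "r > 0" using assms K by (simp add: r_def)
  have "4 * \<mu> * D * r \<le> \<delta>"
    using assms K by (simp add: r_def field_simps)
  show "min (\<mu> * r\<^sup>2) (\<delta> / 2) > 0" using assms r by simp
  fix t :: real assume t: "t \<ge> 0"
  show "min (\<mu> * r\<^sup>2) (\<delta> / 2) \<le> max (\<mu> * t\<^sup>2) (\<delta> - 2 * \<mu> * D * t)"
  proof (cases "r \<le> t")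
    case True
    then have "\<mu> * r\<^sup>2 \<le> \<mu> * t\<^sup>2" using assms r by (simp add: power_mono)
    then show ?thesis by linarith
  next
    case False
    then have "2 * \<mu> * D * t \<le> 2 * \<mu> * D * r" using assms by (simp add: mult_left_mono)
    with \<open>4 * \<mu> * D * r \<le> \<delta>\<close> show ?thesis by linarith
  qed
qed

lemma min_lagrangian_uniformly_below_diagonal:
  assumes "\<mu> > 0" and "lagrangian I \<Phi> \<mu> y (\<Phi> x) < lagrangian I \<Phi> \<mu> x (\<Phi> x)"
  obtains \<epsilon> where "\<epsilon> > 0"
    and "\<And>l. min (lagrangian I \<Phi> \<mu> x l) (lagrangian I \<Phi> \<mu> y l) \<le> lagrangian I \<Phi> \<mu> x (\<Phi> x) - \<epsilon>"
proof -
  let ?L = "lagrangian I \<Phi> \<mu>"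
  define \<delta> where "\<delta> = ?L x (\<Phi> x) - ?L y (\<Phi> x)"
  define d where "d = \<Phi> y - \<Phi> x"
  obtain \<epsilon> where "\<epsilon> > 0"
    and gap: "\<And>t. t \<ge> 0 \<Longrightarrow> \<epsilon> \<le> max (\<mu> * t\<^sup>2) (\<delta> - 2 * \<mu> * norm d * t)"
    using quadratic_linear_max_bounded_below[OF \<open>\<mu> > 0\<close>, of \<delta> "norm d"] assms(2)
    by (auto simp: \<delta>_def)
  have "min (?L x l) (?L y l) \<le> ?L x (\<Phi> x) - \<epsilon>" for l
  proof -
    define h where "h = l - \<Phi> x"
    have l: "l = \<Phi> x + h" by (simp add: h_def)
    have Lx: "?L x l = ?L x (\<Phi> x) - \<mu> * (norm h)\<^sup>2"
      unfolding l lagrangian_at_shift by simp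
    have Ly: "?L y l = ?L y (\<Phi> x) + 2 * \<mu> * inner d h - \<mu> * (norm h)\<^sup>2"
      unfolding l lagrangian_at_shift d_def by simp
    have "2 * \<mu> * inner d h \<le> 2 * \<mu> * norm d * norm h"
      using norm_cauchy_schwarz[of d h] \<open>\<mu> > 0\<close> by (simp add: mult_left_mono)
    moreover have "0 \<le> \<mu> * (norm h)\<^sup>2" using \<open>\<mu> > 0\<close> by simp
    ultimately have Ly_bound: "?L y l \<le> ?L x (\<Phi> x) - (\<delta> - 2 * \<mu> * norm d * norm h)"
      using Ly \<delta>_def by linarith
    have "\<epsilon> \<le> \<mu> * (norm h)\<^sup>2 \<or> \<epsilon> \<le> \<delta> - 2 * \<mu> * norm d * norm h"
      using gap[OF norm_ge_zero, of h] by (simp add: le_max_iff_disj)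
    then show ?thesis
    proof
      assume "\<epsilon> \<le> \<mu> * (norm h)\<^sup>2"
      with Lx show ?thesis by (intro min.coboundedI1) linarith
    next
      assume "\<epsilon> \<le> \<delta> - 2 * \<mu> * norm d * norm h"
      with Ly_bound show ?thesis by (intro min.coboundedI2) linarith
    qed
  qed
  then show ?thesis using \<open>\<epsilon> > 0\<close> that by blast
qed

lemma sup_inf_lagrangian_less_inf_sup:
  assumes "\<mu> > 0" and "u \<in> A" and "y \<in> A"
    and "lagrangian I \<Phi> \<mu> y (\<Phi> u) < lagrangian I \<Phi> \<mu> u (\<Phi> u)"
    and u_min: "\<And>x. x \<in> A \<Longrightarrow> lagrangian I \<Phi> \<mu> u (\<Phi> u) \<le> lagrangian I \<Phi> \<mu> x (\<Phi> x)"
  shows "(SUP l. INF x\<in>A. ereal (lagrangian I \<Phi> \<mu> x l))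
          < (INF x\<in>A. SUP l\<in>\<Phi> ` A. ereal (lagrangian I \<Phi> \<mu> x l))"
proof -
  let ?L = "lagrangian I \<Phi> \<mu>"
  obtain \<epsilon> where "\<epsilon> > 0" and below: "\<And>l. min (?L u l) (?L y l) \<le> ?L u (\<Phi> u) - \<epsilon>"
    using min_lagrangian_uniformly_below_diagonal[OF assms(1,4)] by blast
  have "(SUP l. INF x\<in>A. ereal (?L x l)) \<le> ereal (?L u (\<Phi> u) - \<epsilon>)"
  proof (rule SUP_least)
    fix l
    have "(INF x\<in>A. ereal (?L x l)) \<le> min (ereal (?L u l)) (ereal (?L y l))"
      using \<open>u \<in> A\<close> \<open>y \<in> A\<close> by (auto intro!: INF_lower)
    also have "\<dots> \<le> ereal (?L u (\<Phi> u) - \<epsilon>)" using below[of l] by (auto simp: min_le_iff_disj)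
    finally show "(INF x\<in>A. ereal (?L x l)) \<le> ereal (?L u (\<Phi> u) - \<epsilon>)" .
  qed
  also have "\<dots> < ereal (?L u (\<Phi> u))" using \<open>\<epsilon> > 0\<close> by simp
  also have "\<dots> \<le> (INF x\<in>A. SUP l\<in>\<Phi> ` A. ereal (?L x l))"
  proof (rule INF_greatest)
    fix x assume "x \<in> A"
    then have "ereal (?L x (\<Phi> x)) \<le> (SUP l\<in>\<Phi> ` A. ereal (?L x l))" by (auto intro: SUP_upper)
    with u_min[OF \<open>x \<in> A\<close>] show "ereal (?L u (\<Phi> u)) \<le> (SUP l\<in>\<Phi> ` A. ereal (?L x l))"
      by (meson ereal_less_eq(3) order_trans)
  qed
  finally show ?thesis .
qed

lemma filtering_cover_common_member:
  assumes "filtering_cover X N" and "x \<in> X" and "y \<in> X"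
  obtains A where "A \<in> N" and "A \<subseteq> X" and "x \<in> A" and "y \<in> A"
proof -
  from assms obtain A1 A2 where "A1 \<in> N" "x \<in> A1" "A2 \<in> N" "y \<in> A2"
    unfolding filtering_cover_def by blast
  with assms(1) obtain A where "A \<in> N" "A1 \<union> A2 \<subseteq> A"
    unfolding filtering_cover_def by blast
  with assms(1) \<open>x \<in> A1\<close> \<open>y \<in> A2\<close> show ?thesis
    using that unfolding filtering_cover_def by blast
qed

theorem theorem3p4:
  fixes X :: "'a set" and I :: "'a \<Rightarrow> real" and \<Phi> :: "'a \<Rightarrow> 'b::real_inner"
    and \<mu> :: real
  assumes "X \<noteq> {}" and "\<mu> > 0"
    and "\<exists>u\<in>X. \<forall>x\<in>X. I u + \<mu> * (norm (\<Phi> u))\<^sup>2 \<le> I x + \<mu> * (norm (\<Phi> x))\<^sup>2"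
  shows "(\<forall>N. filtering_cover X N \<longrightarrow>
            (\<exists>A\<in>N. (SUP l\<in>(UNIV::'b set). INF x\<in>A.
                        ereal (I x + \<mu> * (2 * inner (\<Phi> x) l - (norm l)\<^sup>2)))
                    < (INF x\<in>A. SUP l\<in>\<Phi> ` A.
                        ereal (I x + \<mu> * (2 * inner (\<Phi> x) l - (norm l)\<^sup>2)))))
       \<or> (\<forall>u\<in>X. (\<forall>x\<in>X. I u + \<mu> * (norm (\<Phi> u))\<^sup>2 \<le> I x + \<mu> * (norm (\<Phi> x))\<^sup>2) \<longrightarrow>
            (\<forall>x\<in>X. I u \<le> I x + 2 * \<mu> * (inner (\<Phi> x) (\<Phi> u) - (norm (\<Phi> u))\<^sup>2)))"
proof (rule disjCI)
  let ?L = "lagrangian I \<Phi> \<mu>"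
  assume "\<not> (\<forall>u\<in>X. (\<forall>x\<in>X. I u + \<mu> * (norm (\<Phi> u))\<^sup>2 \<le> I x + \<mu> * (norm (\<Phi> x))\<^sup>2) \<longrightarrow>
            (\<forall>x\<in>X. I u \<le> I x + 2 * \<mu> * (inner (\<Phi> x) (\<Phi> u) - (norm (\<Phi> u))\<^sup>2)))"
  then obtain u y where "u \<in> X" "y \<in> X"
    and u_min: "\<And>x. x \<in> X \<Longrightarrow> ?L u (\<Phi> u) \<le> ?L x (\<Phi> x)"
    and y_below: "?L y (\<Phi> u) < ?L u (\<Phi> u)"
    by (auto simp: lagrangian_diagonal) (auto simp: lagrangian_def power2_norm_eq_inner algebra_simps)
  show "\<forall>N. filtering_cover X N \<longrightarrow>
          (\<exists>A\<in>N. (SUP l. INF x\<in>A. ereal (I x + \<mu> * (2 * inner (\<Phi> x) l - (norm l)\<^sup>2)))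
                  < (INF x\<in>A. SUP l\<in>\<Phi> ` A. ereal (I x + \<mu> * (2 * inner (\<Phi> x) l - (norm l)\<^sup>2))))"
  proof (intro allI impI)
    fix N assume "filtering_cover X N"
    then obtain A where "A \<in> N" "A \<subseteq> X" "u \<in> A" "y \<in> A"
      using filtering_cover_common_member \<open>u \<in> X\<close> \<open>y \<in> X\<close> by metis
    with u_min y_below sup_inf_lagrangian_less_inf_sup[OF \<open>\<mu> > 0\<close>, of u A y I \<Phi>]
    show "\<exists>A\<in>N. (SUP l. INF x\<in>A. ereal (I x + \<mu> * (2 * inner (\<Phi> x) l - (norm l)\<^sup>2)))
                < (INF x\<in>A. SUP l\<in>\<Phi> ` A. ereal (I x + \<mu> * (2 * inner (\<Phi> x) l - (norm l)\<^sup>2)))"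
      unfolding lagrangian_def by blast
  qed
qed

end
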